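(* Let $n>k\geq1$, $r=n-k$, and let $h,d$ be integers with $2\leq h\leq n-k$, $k<d\leq n-h$, $(d-k)\mid h$ and $(\frac{h}{d-k}+1)\mid 2^n$. Put $\delta=d-k$, $N=h/\delta$ (so $N=2^w-1$ for some integer $w\geq1$) and $\ell=2^n$. Let $F$ be a finite field with $|F|>2n$ and $\lambda_{j,0},\lambda_{j,1}$, $j\in[n]$, be $2n$ distinct elements of $F$, and let $\mathcal{C}$ be the (Hadamard MSR) code of all $(\bm c_1,\ldots,\bm c_n)$, $\bm c_j=(c_{j,0},\ldots,c_{j,\ell-1})\in F^\ell$, with $\sum_{j\in[n]}\lambda_{j,a_j}^{t-1}c_{j,a}=0$ for all $a\in[0,\ell-1]$, $t\in[r]$. Let $\mathcal{H}\subseteq[n]$ with $|\mathcal{H}|=h$ be the set of failed nodes and $\mathcal{R}\subseteq[n]\setminus\mathcal{H}$ with $|\mathcal{R}|=d$ the helper nodes. Partition $\mathcal{H}$ into disjoint sets $P_1,\ldots,P_N$ of size $\delta$, pick $m_i\in P_i$ for each $i\in[N]$, let $M=(m_1,\ldots,m_N)$, and let $V_0\subseteq\mathbb{F}_2^N$ be the binary Hamming code of length $N$ (dimension $N-w$, minimum distance $3$). Then every codeword's $\bm c_j$, $j\in\mathcal{H}$, can be recovered from the symbols $$\Big\{\sum_{v\in\{0,1\}}c_{j,\,a(P_i,a|_{P_i}\oplus v\bm 1_\delta)}:\ a\in[0,\ell-1]\text{ with }a|_M\in V_0,\ i\in[N]\Big\}$$ downloaded from each helper node $j\in\mathcal{R}$;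 this amounts to $\frac{h\ell}{d-k+h}$ symbols per helper node and total repair bandwidth $\frac{dh\ell}{d-k+h}$, achieving the cut-set bound. In particular $\mathcal{C}$ has the $(h,d)$-optimal repair property.
   Context: Each $a\in[0,2^n-1]$ is identified with its binary expansion $(a_1,\ldots,a_n)\in\{0,1\}^n$, $a=\sum_i a_i2^{i-1}$. For $\mathcal{X}\subseteq[n]$, $a|_{\mathcal{X}}$ is the vector of bits $(a_x)_{x\in\mathcal{X}}$ (for $M=(m_1,\ldots,m_N)$, $a|_M=(a_{m_1},\ldots,a_{m_N})\in\mathbb{F}_2^N$), and $a(\mathcal{X},\bm v)$ is the integer whose bits on $\mathcal{X}$ equal $\bm v$ and whose other bits equal those of $a$; $\oplus$ is bitwise addition mod 2 and $\bm 1_\delta$ is the all-one vector of length $\delta$. The binary Hamming code of length $N=2^w-1$ is the kernel of the $w\times N$ binary matrix whose columns are all nonzero vectors of $\mathbb{F}_2^w$. The cut-set bound for repairing $h$ nodes from $d$ helpers in an $(n,k,\ell)$ MDS array code is that each helper must send at least $\frac{h\ell}{d-k+h}$ symbols; the $(h,d)$-optimal repair property means that for every $h$-set $\mathcal{H}$ and every $d$-set $\mathcal{R}\subseteq[n]\setminus\mathcal{H}$ the failed nodes can be recovered with each helper sending exactly $\frac{h\ell}{d-k+h}$ symbols computed from its own content. *)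

theory Defs
  imports Complex_Main
begin

text \<open>Bit i (1-based, i in [n]) of the integer a = sum_i a_i 2^(i-1).\<close>
definition bitv :: "nat \<Rightarrow> nat \<Rightarrow> nat" where
  "bitv a i = (a div 2 ^ (i - 1)) mod 2"

text \<open>a(X, v): the integer in [0,2^n-1] whose bits on X are given by g and whose
  other bits equal those of a.\<close>
definition set_bits :: "nat \<Rightarrow> nat \<Rightarrow> nat set \<Rightarrow> (nat \<Rightarrow> nat) \<Rightarrow> nat" where
  "set_bits n a X g = (\<Sum>i\<in>{1..n}. (if i \<in> X then g i else bitv a i) * 2 ^ (i - 1))"

text \<open>Hadamard MSR code: codewords c, with c j the content (c_{j,0},...,c_{j,l-1}) of node j;
  entries outside j in [n], a in [0,2^n-1] are fixed to 0.\<close>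
definition hadamard_msr_code ::
  "nat \<Rightarrow> nat \<Rightarrow> (nat \<Rightarrow> nat \<Rightarrow> 'a::field) \<Rightarrow> (nat \<Rightarrow> nat \<Rightarrow> 'a) set" where
  "hadamard_msr_code n k lam =
    {c. (\<forall>j a. (j \<notin> {1..n} \<or> a \<ge> 2 ^ n) \<longrightarrow> c j a = 0) \<and>
        (\<forall>a < 2 ^ n. \<forall>t \<in> {1..n - k}.
           (\<Sum>j\<in>{1..n}. lam j (bitv a j) ^ (t - 1) * c j a) = 0)}"

text \<open>Binary Hamming code of length N = 2^w - 1: kernel of the w x N parity-check matrix
  whose i-th column is the binary expansion of col i; col enumerates all nonzero vectors of
  F_2^w (i.e. col is a bijection of [N] onto [1, 2^w-1]). Vectors of F_2^N are
  functions x with x i in {0,1} for i in [N].\<close>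
definition hamming_code :: "nat \<Rightarrow> (nat \<Rightarrow> nat) \<Rightarrow> (nat \<Rightarrow> nat) set" where
  "hamming_code w col =
    {x. (\<forall>i\<in>{1..2 ^ w - 1}. x i \<in> {0, 1}) \<and>
        (\<forall>s < w. even (\<Sum>i\<in>{1..2 ^ w - 1}. x i * ((col i div 2 ^ s) mod 2)))}"

text \<open>(h,d)-optimal repair property of an (n,k,l) array code C: for every h-set H of failed
  nodes and every d-set R of helpers disjoint from H, there are s = h l/(d-k+h) symbols
  per helper, each computed (by g j) from the helper's own content, from which the
  failed nodes are determined.\<close>
definition hd_optimal_repair ::
  "nat \<Rightarrow> nat \<Rightarrow> nat \<Rightarrow> nat \<Rightarrow> nat \<Rightarrow> (nat \<Rightarrow> nat \<Rightarrow> 'a) set \<Rightarrow> bool" where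
  "hd_optimal_repair n k l h d C \<longleftrightarrow>
    (\<forall>H R. H \<subseteq> {1..n} \<and> card H = h \<and> R \<subseteq> {1..n} - H \<and> card R = d \<longrightarrow>
      (\<exists>(s::nat) (g :: nat \<Rightarrow> (nat \<Rightarrow> 'a) \<Rightarrow> nat \<Rightarrow> 'a).
         real s = real h * real l / (real d - real k + real h) \<and>
         (\<forall>c\<in>C. \<forall>c'\<in>C.
            (\<forall>j\<in>R. \<forall>t<s. g j (c j) t = g j (c' j) t) \<longrightarrow> (\<forall>j\<in>H. c j = c' j))))"

end

theory Submission
  imports Defs "HOL-Computational_Algebra.Polynomial"
begin

(* Let e = c - c' for two codewords whose downloaded symbols agree. Then e is a codeword, and
   e_{j,a} + e_{j,a'} = 0 at every helper j whenever a|_M lies in the Hamming code and a' is a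
   with its bits on P_i complemented. Adding the parity checks of the rows a and a' gives
   r = n - k vanishing power sums in the 2n distinct nodes lambda_{j,v}, with weights supported
   on at most 2 delta + (n - delta - d) = r nodes, because those at the helpers vanish. By the
   Vandermonde argument all weights are zero: e vanishes on P_i in the rows a and a', and
   e_{j,a'} = - e_{j,a} = 0 on every other block of H. Complementing P_i adds the column col i
   to the syndrome of a|_M, so a row whose syndrome is col i arises as a' from a Hamming row a,
   and e vanishes on H in every row. For the same reason the 2^w syndrome classes are
   equinumerous, and each helper sends N 2^n / (N + 1) = h l / (d - k + h) symbols. *)

section \<open>Binary expansions\<close>

lemma bitv_less_2: "bitv a i < 2"
  unfolding bitv_def by simp

lemma bitv_Suc: "bitv a (Suc i) = (if bit a i then 1 else 0)"
  unfolding bitv_def by (simp add: bit_iff_odd odd_iff_mod_2_eq_one)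

lemma bitv_mod_power: "i \<in> {1..n} \<Longrightarrow> bitv (a mod 2 ^ n) i = bitv a i"
  by (cases i) (auto simp: bitv_Suc bit_take_bit_iff simp flip: take_bit_eq_mod)

lemma bitv_eqI:
  fixes x y :: nat
  assumes "x < 2 ^ n" "y < 2 ^ n" "\<And>i. i \<in> {1..n} \<Longrightarrow> bitv x i = bitv y i"
  shows "x = y"
proof (rule bit_eqI)
  fix q
  show "bit x q \<longleftrightarrow> bit y q"
  proof (cases "q < n")
    case True
    then show ?thesis using assms(3)[of "Suc q"] by (simp add: bitv_Suc split: if_splits)
  next
    case False
    then show ?thesis
      using assms(1,2) by (metis bit_take_bit_iff take_bit_nat_eq_self_iff)
  qed
qed

lemma sum_bits_less:
  assumes "\<forall>i\<in>{1..n}. f i < (2::nat)"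
  shows "(\<Sum>i\<in>{1..n}. f i * 2 ^ (i - 1)) < 2 ^ n"
  using assms
proof (induction n)
  case (Suc n)
  then have "(\<Sum>i\<in>{1..Suc n}. f i * 2 ^ (i - 1)) < 2 ^ n + f (Suc n) * 2 ^ n"
    by simp
  also have "\<dots> \<le> 2 ^ Suc n"
    using Suc.prems(1)[rule_format, of "Suc n"] by (auto simp: less_2_cases_iff)
  finally show ?case .
qed simp

lemma bitv_sum_bits:
  assumes "\<forall>i\<in>{1..n}. f i < (2::nat)" and "i \<in> {1..n}"
  shows "bitv (\<Sum>i\<in>{1..n}. f i * 2 ^ (i - 1)) i = f i"
  using assms
proof (induction n)
  case (Suc n)
  define S where "S = (\<Sum>i\<in>{1..n}. f i * 2 ^ (i - 1))"
  have S_less: "S < 2 ^ n"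
    unfolding S_def using Suc.prems(1) by (intro sum_bits_less) simp
  have sum_Suc: "(\<Sum>i\<in>{1..Suc n}. f i * 2 ^ (i - 1)) = S + f (Suc n) * 2 ^ n"
    by (simp add: S_def)
  show ?case
  proof (cases "i = Suc n")
    case True
    then show ?thesis
      unfolding sum_Suc using S_less Suc.prems(1) by (simp add: bitv_def)
  next
    case False
    then have i: "i \<in> {1..n}"
      using Suc.prems(2) by simp
    then have "bitv (S + f (Suc n) * 2 ^ n) i = bitv ((S + f (Suc n) * 2 ^ n) mod 2 ^ n) i"
      by (rule bitv_mod_power[symmetric])
    also have "\<dots> = bitv S i"
      using S_less by simp
    also have "\<dots> = f i"
      unfolding S_def using Suc.IH Suc.prems(1) i by simp
    finally show ?thesis unfolding sum_Suc .
  qed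
qed simp

lemma bitv_eq_0_or_1: "bitv a i = 0 \<or> bitv a i = 1"
  using bitv_less_2[of a i] by linarith

lemma bitv_xor: "bitv (xor x y) i = (bitv x i + bitv y i) mod 2"
proof -
  have "bitv a i = bitv a (Suc (i - 1))" for a
    by (simp add: bitv_def)
  then show ?thesis
    by (simp add: bitv_Suc bit_xor_iff)
qed

lemma xor_less_power:
  fixes x y :: nat
  shows "x < 2 ^ w \<Longrightarrow> y < 2 ^ w \<Longrightarrow> xor x y < 2 ^ w"
  by (metis take_bit_nat_eq_self_iff take_bit_xor)

lemma set_bits_less: "\<forall>i\<in>X. g i < 2 \<Longrightarrow> set_bits n a X g < 2 ^ n"
  unfolding set_bits_def by (rule sum_bits_less) (simp add: bitv_less_2)

lemma bitv_set_bits: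
  assumes "\<forall>i\<in>X. g i < 2" "i \<in> {1..n}"
  shows "bitv (set_bits n a X g) i = (if i \<in> X then g i else bitv a i)"
  unfolding set_bits_def using assms by (subst bitv_sum_bits) (auto simp: bitv_less_2)

lemma set_bits_bitv: "a < 2 ^ n \<Longrightarrow> set_bits n a X (bitv a) = a"
  by (rule bitv_eqI[OF set_bits_less]) (auto simp: bitv_less_2 bitv_set_bits)

section \<open>Sparse vanishing power sums\<close>

lemma poly_eq_sum_below_degree_bound:
  fixes p :: "'a::comm_semiring_1 poly"
  assumes "degree p < r"
  shows "poly p z = (\<Sum>t<r. coeff p t * z ^ t)"
  unfolding poly_altdef
  by (rule sum.mono_neutral_left) (use assms in \<open>auto simp: coeff_eq_0\<close>)

lemma sparse_power_sums_eq_0: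
  fixes x y :: "'b \<Rightarrow> 'a::field"
  assumes fin: "finite T" and inj: "inj_on x T"
    and power_sums: "\<And>t. t < r \<Longrightarrow> (\<Sum>s\<in>T. x s ^ t * y s) = 0"
    and sparse: "card {s\<in>T. y s \<noteq> 0} \<le> r"
    and s0: "s0 \<in> T"
  shows "y s0 = 0"
proof (rule ccontr)
  assume y_s0: "y s0 \<noteq> 0"
  define Z where "Z = {s\<in>T. y s \<noteq> 0} - {s0}"
  define p where "p = (\<Prod>s\<in>Z. [:- x s, 1:])"
  have fin_Z: "finite Z"
    unfolding Z_def using fin by simp
  have "card Z < card {s\<in>T. y s \<noteq> 0}"
    unfolding Z_def using fin s0 y_s0 by (intro card_Diff1_less) auto
  then have "card Z < r"
    using sparse by linarith
  moreover have "degree p \<le> card Z"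
    unfolding p_def using degree_prod_sum_le[OF fin_Z, of "\<lambda>s. [:- x s, 1:]"] by simp
  ultimately have deg: "degree p < r"
    by linarith
  have poly_p: "poly p z = (\<Prod>s\<in>Z. z - x s)" for z
    unfolding p_def by (simp add: poly_prod)
  have "(\<Sum>s\<in>T. poly p (x s) * y s) = (\<Sum>s\<in>T. \<Sum>t<r. coeff p t * (x s ^ t * y s))"
    by (simp add: poly_eq_sum_below_degree_bound[OF deg] sum_distrib_right mult.assoc)
  also have "\<dots> = (\<Sum>t<r. \<Sum>s\<in>T. coeff p t * (x s ^ t * y s))"
    by (rule sum.swap)
  also have "\<dots> = (\<Sum>t<r. coeff p t * (\<Sum>s\<in>T. x s ^ t * y s))"
    by (simp add: sum_distrib_left)
  also have "\<dots> = 0"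
    using power_sums by simp
  finally have "(\<Sum>s\<in>T. poly p (x s) * y s) = 0" .
  moreover have "(\<Sum>s\<in>T. poly p (x s) * y s) = poly p (x s0) * y s0"
  proof -
    have "poly p (x s) * y s = 0" if "s \<in> T - {s0}" for s
      using that fin_Z unfolding poly_p Z_def by (cases "y s = 0") auto
    then show ?thesis
      using fin s0 by (simp add: sum.remove sum.neutral)
  qed
  moreover have "poly p (x s0) \<noteq> 0"
    using inj s0 fin_Z unfolding poly_p Z_def inj_on_def by auto
  ultimately show False
    using y_s0 by simp
qed

section \<open>Repairing a pair of rows of the Hadamard MSR code\<close>

lemma hadamard_msr_code_diff:
  assumes "c \<in> hadamard_msr_code n k lam" "c' \<in> hadamard_msr_code n k lam"
  shows "(\<lambda>j a. c j a - c' j a) \<in> hadamard_msr_code n k lam"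
  using assms unfolding hadamard_msr_code_def
  by (auto simp: right_diff_distrib sum_subtractf)

lemma hadamard_msr_code_outside:
  "e \<in> hadamard_msr_code n k lam \<Longrightarrow> \<not> a < 2 ^ n \<Longrightarrow> e j a = 0"
  unfolding hadamard_msr_code_def by auto

lemma hadamard_msr_code_check:
  assumes "e \<in> hadamard_msr_code n k lam" "a < 2 ^ n" "t < n - k"
  shows "(\<Sum>j\<in>{1..n}. lam j (bitv a j) ^ t * e j a) = 0"
proof -
  have "Suc t \<in> {1..n - k}"
    using assms(3) by simp
  then have "(\<Sum>j\<in>{1..n}. lam j (bitv a j) ^ (Suc t - 1) * e j a) = 0"
    using assms(1,2) unfolding hadamard_msr_code_def by blast
  then show ?thesis
    by simp
qed

text \<open>The weight of the node lam j v in the sum of the parity checks of the rows a and a'.\<close>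
definition row_pair_weight ::
  "(nat \<Rightarrow> nat \<Rightarrow> 'a::comm_monoid_add) \<Rightarrow> nat \<Rightarrow> nat \<Rightarrow> nat \<times> nat \<Rightarrow> 'a" where
  "row_pair_weight e a a' = (\<lambda>(j, v). (if v = bitv a j then e j a else 0)
                                     + (if v = bitv a' j then e j a' else 0))"

lemma hadamard_msr_row_pair_power_sums:
  assumes e: "e \<in> hadamard_msr_code n k lam" and a: "a < 2 ^ n" and a': "a' < 2 ^ n"
    and t: "t < n - k"
  shows "(\<Sum>(j, v)\<in>{1..n} \<times> {0, 1}. lam j v ^ t * row_pair_weight e a a' (j, v)) = 0"
proof -
  have pair: "(\<Sum>v\<in>{0, 1}. lam j v ^ t * row_pair_weight e a a' (j, v))
      = lam j (bitv a j) ^ t * e j a + lam j (bitv a' j) ^ t * e j a'" for j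
    using bitv_eq_0_or_1[of a j] bitv_eq_0_or_1[of a' j] unfolding row_pair_weight_def
    by (elim disjE) (simp_all add: algebra_simps)
  have "(\<Sum>(j, v)\<in>{1..n} \<times> {0, 1}. lam j v ^ t * row_pair_weight e a a' (j, v))
      = (\<Sum>j\<in>{1..n}. \<Sum>v\<in>{0, 1}. lam j v ^ t * row_pair_weight e a a' (j, v))"
    by (rule sum.cartesian_product[symmetric])
  also have "\<dots> = 0"
    unfolding pair sum.distrib
    using hadamard_msr_code_check[OF e a t] hadamard_msr_code_check[OF e a' t] by simp
  finally show ?thesis .
qed

lemma card_row_pair_support_le:
  assumes Q: "Q \<subseteq> {1..n}" and R: "R \<subseteq> {1..n} - Q" and card_QR: "card Q + k \<le> card R"
    and S: "S \<subseteq> Q \<times> {0::nat, 1} \<union> (\<lambda>j. (j, g j)) ` ({1..n} - Q - R)"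
  shows "card S \<le> n - k"
proof -
  have fin_Q: "finite Q" and fin_R: "finite R"
    using Q R by (auto intro: finite_subset)
  have "Q \<inter> R = {}"
    using R by blast
  then have card_Q_R: "card (Q \<union> R) = card Q + card R"
    using fin_Q fin_R by (rule card_Un_disjoint[rotated 2])
  have QR_n: "Q \<union> R \<subseteq> {1..n}"
    using Q R by blast
  have "{1..n} - Q - R = {1..n} - (Q \<union> R)"
    by blast
  then have card_rest: "card ({1..n} - Q - R) = n - (card Q + card R)"
    using card_Diff_subset[OF finite_subset[OF QR_n] QR_n] by (simp add: card_Q_R)
  have "card Q + card R \<le> n"
    using card_mono[OF _ QR_n] by (simp add: card_Q_R)
  have "card S \<le> card (Q \<times> {0::nat, 1} \<union> (\<lambda>j. (j, g j)) ` ({1..n} - Q - R))"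
    using fin_Q by (intro card_mono[OF _ S]) auto
  also have "\<dots> \<le> card (Q \<times> {0::nat, 1}) + card ({1..n} - Q - R)"
    using card_Un_le card_image_le[of "{1..n} - Q - R" "\<lambda>j. (j, g j)"]
    by (meson add_left_mono finite_Diff finite_atLeastAtMost order_trans)
  also have "\<dots> = 2 * card Q + (n - (card Q + card R))"
    unfolding card_rest by (simp add: card_cartesian_product)
  also have "\<dots> \<le> n - k"
    using card_QR \<open>card Q + card R \<le> n\<close> by linarith
  finally show ?thesis .
qed

text \<open>Where the rows a and a' agree in bit j, the node (j, bitv a j) carries the weight
  e j a + e j a'; this vanishes at the helpers, so the weights are supported on Q \<times> {0, 1} and
  on one node for each non-helper outside Q.\<close>
lemma hadamard_msr_row_pair_repair:
  fixes lam :: "nat \<Rightarrow> nat \<Rightarrow> 'a::field"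
  assumes lam_inj: "inj_on (\<lambda>(j, v). lam j v) ({1..n} \<times> {0, 1})"
    and e: "e \<in> hadamard_msr_code n k lam"
    and a: "a < 2 ^ n" and a': "a' < 2 ^ n"
    and Q: "Q \<subseteq> {1..n}" and agree: "\<And>j. j \<in> {1..n} - Q \<Longrightarrow> bitv a' j = bitv a j"
    and R: "R \<subseteq> {1..n} - Q" and card_QR: "card Q + k \<le> card R"
    and helpers: "\<And>j. j \<in> R \<Longrightarrow> e j a + e j a' = 0"
    and j: "j \<in> {1..n}"
  shows "bitv a' j = bitv a j \<Longrightarrow> e j a + e j a' = 0"
    and "bitv a' j \<noteq> bitv a j \<Longrightarrow> e j a = 0 \<and> e j a' = 0"
proof -
  define T where "T = {1..n} \<times> {0::nat, 1}"
  define x where "x = (\<lambda>(j, v). lam j v)"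
  define y where "y = row_pair_weight e a a'"
  have power_sums: "(\<Sum>s\<in>T. x s ^ t * y s) = 0" if "t < n - k" for t
    using hadamard_msr_row_pair_power_sums[OF e a a' that]
    unfolding T_def x_def y_def by (simp add: case_prod_beta)
  have "{s\<in>T. y s \<noteq> 0} \<subseteq> Q \<times> {0, 1} \<union> (\<lambda>j. (j, bitv a j)) ` ({1..n} - Q - R)"
  proof
    fix s assume "s \<in> {s\<in>T. y s \<noteq> 0}"
    then obtain j v where jv: "s = (j, v)" "j \<in> {1..n}" "v \<in> {0, 1}" "y (j, v) \<noteq> 0"
      unfolding T_def by auto
    show "s \<in> Q \<times> {0, 1} \<union> (\<lambda>j. (j, bitv a j)) ` ({1..n} - Q - R)"
    proof (cases "j \<in> Q")
      case False
      then have "y (j, v) = (if v = bitv a j then e j a + e j a' else 0)"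
        using agree jv(2) unfolding y_def row_pair_weight_def by simp
      then have "v = bitv a j" "j \<notin> R"
        using helpers jv(4) by (auto split: if_splits)
      then show ?thesis
        using jv False by blast
    qed (use jv in blast)
  qed
  then have sparse: "card {s\<in>T. y s \<noteq> 0} \<le> n - k"
    by (rule card_row_pair_support_le[OF Q R card_QR])
  have "inj_on x T"
    using lam_inj unfolding x_def T_def .
  then have y_0: "y s = 0" if "s \<in> T" for s
    using sparse_power_sums_eq_0[OF _ _ power_sums sparse that] unfolding T_def by simp
  have "(j, bitv a j) \<in> T" "(j, bitv a' j) \<in> T"
    unfolding T_def using j bitv_eq_0_or_1 by auto
  then have "y (j, bitv a j) = 0" "y (j, bitv a' j) = 0"
    using y_0 by blast+
  then show "bitv a' j = bitv a j \<Longrightarrow> e j a + e j a' = 0"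
    and "bitv a' j \<noteq> bitv a j \<Longrightarrow> e j a = 0 \<and> e j a' = 0"
    unfolding y_def row_pair_weight_def by auto
qed

section \<open>Partitions and download schemes\<close>

lemma partition_into_equal_blocks:
  fixes H :: "'a set"
  assumes fin: "finite H" and card_H: "card H = N * \<delta>"
  obtains P where "\<And>i. i \<in> {1..N} \<Longrightarrow> card (P i) = \<delta>"
    and "\<And>i i'. i \<in> {1..N} \<Longrightarrow> i' \<in> {1..N} \<Longrightarrow> i \<noteq> i' \<Longrightarrow> P i \<inter> P i' = {}"
    and "(\<Union>i\<in>{1..N}. P i) = H"
proof -
  obtain f where f: "bij_betw f {0..<N * \<delta>} H"
    using ex_bij_betw_nat_finite[OF fin] card_H by metis
  define I where "I i = {(i - 1) * \<delta>..<i * \<delta>}" for i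
  have I_union: "(\<Union>i\<in>{1..M}. I i) = {0..<M * \<delta>}" for M
    by (induction M) (auto simp: I_def atLeastAtMostSuc_conv ivl_disj_un_two(3)[symmetric])
  have I_disjoint: "I i \<inter> I i' = {}" if "i < i'" for i i'
  proof -
    have "i * \<delta> \<le> (i' - 1) * \<delta>"
      using that by (intro mult_le_mono1) simp
    then show ?thesis
      unfolding I_def by auto
  qed
  have I_subset: "I i \<subseteq> {0..<N * \<delta>}" if "i \<in> {1..N}" for i
    using I_union[of N] that by blast
  have inj: "inj_on f {0..<N * \<delta>}"
    using f by (rule bij_betw_imp_inj_on)
  show ?thesis
  proof (rule that[of "\<lambda>i. f ` I i"])
    fix i assume i: "i \<in> {1..N}"
    have "card (I i) = \<delta>"
      using i unfolding I_def by (cases i) simp_all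
    then show "card (f ` I i) = \<delta>"
      using card_image[OF inj_on_subset[OF inj I_subset[OF i]]] by simp
  next
    fix i i' assume "i \<in> {1..N}" "i' \<in> {1..N}" "i \<noteq> i'"
    then show "f ` I i \<inter> f ` I i' = {}"
      using I_disjoint[of i i'] I_disjoint[of i' i] I_subset
      by (metis inj_on_image_Int[OF inj] image_empty inf_commute linorder_neq_iff)
  next
    show "(\<Union>i\<in>{1..N}. f ` I i) = H"
      using f I_union[of N] unfolding bij_betw_def by (simp flip: image_UN)
  qed
qed

lemma hd_optimal_repairI:
  fixes C :: "(nat \<Rightarrow> nat \<Rightarrow> 'a) set"
  assumes "\<And>H R. H \<subseteq> {1..n} \<Longrightarrow> card H = h \<Longrightarrow> R \<subseteq> {1..n} - H \<Longrightarrow> card R = d \<Longrightarrow>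
    \<exists>D (q :: 'b \<Rightarrow> (nat \<Rightarrow> 'a) \<Rightarrow> 'a). finite D
       \<and> real (card D) = real h * real l / (real d - real k + real h)
       \<and> (\<forall>c\<in>C. \<forall>c'\<in>C. (\<forall>j\<in>R. \<forall>x\<in>D. q x (c j) = q x (c' j)) \<longrightarrow> (\<forall>j\<in>H. c j = c' j))"
  shows "hd_optimal_repair n k l h d C"
  unfolding hd_optimal_repair_def
proof (intro allI impI)
  fix H R assume "H \<subseteq> {1..n} \<and> card H = h \<and> R \<subseteq> {1..n} - H \<and> card R = d"
  then obtain D and q :: "'b \<Rightarrow> (nat \<Rightarrow> 'a) \<Rightarrow> 'a" where D: "finite D"
    and card_D: "real (card D) = real h * real l / (real d - real k + real h)"
    and repair: "\<forall>c\<in>C. \<forall>c'\<in>C. (\<forall>j\<in>R. \<forall>x\<in>D. q x (c j) = q x (c' j)) \<longrightarrow> (\<forall>j\<in>H. c j = c' j)"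
    using assms[of H R] by blast
  obtain enum where enum: "enum ` {0..<card D} = D"
    using ex_bij_betw_nat_finite[OF D] unfolding bij_betw_def by blast
  show "\<exists>s (g :: nat \<Rightarrow> (nat \<Rightarrow> 'a) \<Rightarrow> nat \<Rightarrow> 'a). real s = real h * real l / (real d - real k + real h)
       \<and> (\<forall>c\<in>C. \<forall>c'\<in>C. (\<forall>j\<in>R. \<forall>t<s. g j (c j) t = g j (c' j) t) \<longrightarrow> (\<forall>j\<in>H. c j = c' j))"
  proof (intro exI[of _ "card D"] exI[of _ "\<lambda>j f t. q (enum t) f"] conjI card_D ballI impI)
    fix c c' j assume "c \<in> C" "c' \<in> C"
    assume "\<forall>j\<in>R. \<forall>t<card D. q (enum t) (c j) = q (enum t) (c' j)"
    moreover have "\<exists>t<card D. x = enum t" if "x \<in> D" for x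
      using that enum by fastforce
    ultimately have "\<forall>j\<in>R. \<forall>x\<in>D. q x (c j) = q x (c' j)"
      by metis
    moreover assume "j \<in> H"
    ultimately show "c j = c' j"
      using repair \<open>c \<in> C\<close> \<open>c' \<in> C\<close> by blast
  qed
qed

section \<open>Blocks indexed by a Hamming code\<close>

locale hamming_blocks =
  fixes n N w :: nat and P :: "nat \<Rightarrow> nat set" and m col :: "nat \<Rightarrow> nat"
  assumes N_eq: "2 ^ w = N + 1"
    and col_bij: "bij_betw col {1..N} {1..2 ^ w - 1}"
    and P_subset: "\<And>i. i \<in> {1..N} \<Longrightarrow> P i \<subseteq> {1..n}"
    and P_disjoint: "\<And>i i'. i \<in> {1..N} \<Longrightarrow> i' \<in> {1..N} \<Longrightarrow> i \<noteq> i' \<Longrightarrow> P i \<inter> P i' = {}"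
    and m_in_P: "\<And>i. i \<in> {1..N} \<Longrightarrow> m i \<in> P i"
begin

text \<open>flip i b is the paper's row b(P_i, b|P_i \<oplus> 1_\<delta>). The syndrome of b|M with respect to the
  columns col i is read as the number below 2 ^ w whose s-th bit is the s-th parity check.\<close>

definition flip :: "nat \<Rightarrow> nat \<Rightarrow> nat" where
  "flip i b = set_bits n b (P i) (\<lambda>x. (bitv b x + 1) mod 2)"

definition parity :: "nat \<Rightarrow> nat \<Rightarrow> nat" where
  "parity s b = (\<Sum>i\<in>{1..N}. bitv b (m i) * bitv (col i) s) mod 2"

definition syndrome :: "nat \<Rightarrow> nat" where
  "syndrome b = (\<Sum>s\<in>{1..w}. parity s b * 2 ^ (s - 1))"

definition hamming_rows :: "nat set" where
  "hamming_rows = {a. a < 2 ^ n \<and> (\<lambda>i. bitv a (m i)) \<in> hamming_code w col}"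

lemma flip_less: "flip i b < 2 ^ n"
  unfolding flip_def by (rule set_bits_less) simp

lemma bitv_flip:
  "j \<in> {1..n} \<Longrightarrow> bitv (flip i b) j = (if j \<in> P i then 1 - bitv b j else bitv b j)"
  unfolding flip_def using bitv_eq_0_or_1[of b j] by (subst bitv_set_bits) auto

lemma flip_flip:
  assumes "b < 2 ^ n"
  shows "flip i (flip i b) = b"
proof (rule bitv_eqI[OF flip_less assms])
  fix j assume "j \<in> {1..n}"
  then show "bitv (flip i (flip i b)) j = bitv b j"
    using bitv_eq_0_or_1[of b j] by (auto simp: bitv_flip)
qed

lemma sum_flip_pair:
  assumes "a < 2 ^ n"
  shows "(\<Sum>v\<in>{0, 1::nat}. f (set_bits n a (P i) (\<lambda>x. (bitv a x + v) mod 2))) = f a + f (flip i a)"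
proof -
  have "(\<lambda>x. (bitv a x + 0) mod 2) = bitv a"
    by (simp add: bitv_def fun_eq_iff)
  then show ?thesis
    using set_bits_bitv[OF assms] by (simp add: flip_def)
qed

lemma bitv_flip_m:
  assumes "i \<in> {1..N}" "i' \<in> {1..N}"
  shows "bitv (flip i b) (m i') = (if i' = i then 1 - bitv b (m i) else bitv b (m i'))"
proof -
  have "m i' \<in> {1..n}"
    using P_subset m_in_P assms(2) by blast
  then show ?thesis
    using assms m_in_P P_disjoint[of i i'] by (subst bitv_flip) auto
qed

lemma parity_flip:
  assumes i: "i \<in> {1..N}"
  shows "parity s (flip i b) = (parity s b + bitv (col i) s) mod 2"
proof -
  define A where "A = (\<Sum>i'\<in>{1..N} - {i}. bitv b (m i') * bitv (col i') s)"
  have "(\<Sum>i'\<in>{1..N} - {i}. bitv (flip i b) (m i') * bitv (col i') s) = A"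
    unfolding A_def using i by (intro sum.cong) (auto simp: bitv_flip_m)
  then have "parity s (flip i b) = ((1 - bitv b (m i)) * bitv (col i) s + A) mod 2"
    using i unfolding parity_def by (simp add: sum.remove bitv_flip_m)
  moreover have "parity s b = (bitv b (m i) * bitv (col i) s + A) mod 2"
    using i unfolding parity_def A_def by (simp add: sum.remove)
  ultimately show ?thesis
    using bitv_eq_0_or_1[of b "m i"] bitv_eq_0_or_1[of "col i" s]
    by (elim disjE) (simp_all, presburger+)
qed

lemma col_less: "i \<in> {1..N} \<Longrightarrow> col i < 2 ^ w"
proof -
  assume "i \<in> {1..N}"
  then have "col i \<in> {1..2 ^ w - 1}"
    using col_bij unfolding bij_betw_def by blast
  moreover have "(0::nat) < 2 ^ w"
    by simp
  ultimately show ?thesis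
    by auto
qed

lemma syndrome_less: "syndrome b < 2 ^ w"
  unfolding syndrome_def parity_def by (rule sum_bits_less) simp

lemma bitv_syndrome: "s \<in> {1..w} \<Longrightarrow> bitv (syndrome b) s = parity s b"
  unfolding syndrome_def parity_def by (rule bitv_sum_bits) simp_all

lemma syndrome_eq_0_iff: "syndrome b = 0 \<longleftrightarrow> (\<forall>s\<in>{1..w}. parity s b = 0)"
proof -
  have bitv_0: "bitv 0 s = 0" for s
    by (simp add: bitv_def)
  show ?thesis
  proof
    assume "syndrome b = 0"
    then show "\<forall>s\<in>{1..w}. parity s b = 0"
      using bitv_syndrome bitv_0 by metis
  next
    assume "\<forall>s\<in>{1..w}. parity s b = 0"
    then show "syndrome b = 0"
      using bitv_eqI[OF syndrome_less, of 0] bitv_syndrome bitv_0 by simp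
  qed
qed

lemma syndrome_flip:
  assumes i: "i \<in> {1..N}"
  shows "syndrome (flip i b) = xor (syndrome b) (col i)"
proof (rule bitv_eqI[OF syndrome_less])
  show "xor (syndrome b) (col i) < 2 ^ w"
    using syndrome_less col_less[OF i] by (rule xor_less_power)
  fix s assume "s \<in> {1..w}"
  then show "bitv (syndrome (flip i b)) s = bitv (xor (syndrome b) (col i)) s"
    by (simp add: bitv_syndrome parity_flip[OF i] bitv_xor)
qed

lemma syndrome_cases: "syndrome b = 0 \<or> (\<exists>i\<in>{1..N}. syndrome b = col i)"
  using syndrome_less[of b] col_bij N_eq unfolding bij_betw_def by (cases "syndrome b = 0") auto

lemma hamming_rows_iff: "a \<in> hamming_rows \<longleftrightarrow> a < 2 ^ n \<and> syndrome a = 0"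
proof -
  have col_bits: "col i div 2 ^ s mod 2 = bitv (col i) (Suc s)" for i s
    by (simp add: bitv_def)
  have "(\<lambda>i. bitv a (m i)) \<in> hamming_code w col \<longleftrightarrow> (\<forall>s<w. parity (Suc s) a = 0)"
    unfolding hamming_code_def parity_def col_bits N_eq
    using bitv_eq_0_or_1 by (simp add: even_iff_mod_2_eq_zero)
  also have "\<dots> \<longleftrightarrow> (\<forall>s\<in>{1..w}. parity s a = 0)"
  proof (intro iffI ballI allI impI)
    fix s assume "\<forall>s<w. parity (Suc s) a = 0" "s \<in> {1..w}"
    then show "parity s a = 0"
      by (cases s) auto
  qed auto
  finally show ?thesis
    unfolding hamming_rows_def syndrome_eq_0_iff by blast
qed

lemma card_hamming_rows: "card hamming_rows * 2 ^ w = 2 ^ n"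
proof -
  define fiber where "fiber u = {b \<in> {..<2 ^ n}. syndrome b = u}" for u
  have card_fiber: "card (fiber u) = card (fiber 0)" if u: "u < 2 ^ w" for u
  proof (cases "u = 0")
    case False
    then have "u \<in> col ` {1..N}"
      using u col_bij unfolding bij_betw_def by auto
    then obtain i where i: "i \<in> {1..N}" "col i = u"
      by blast
    have "bij_betw (flip i) (fiber 0) (fiber u)"
      by (rule bij_betw_byWitness[where f' = "flip i"])
        (use i in \<open>auto simp: fiber_def flip_flip flip_less syndrome_flip\<close>)
    then show ?thesis
      by (simp add: bij_betw_same_card)
  qed simp
  have "2 ^ n = (\<Sum>b<(2::nat) ^ n. 1::nat)"
    by simp
  also have "\<dots> = (\<Sum>u<2 ^ w. \<Sum>b\<in>fiber u. 1)"
    unfolding fiber_def by (rule sum.group[symmetric]) (auto simp: syndrome_less)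
  also have "\<dots> = (\<Sum>u<(2::nat) ^ w. card (fiber 0))"
    using card_fiber by (intro sum.cong refl) (metis card_eq_sum lessThan_iff)
  also have "fiber 0 = hamming_rows"
    unfolding fiber_def by (auto simp: hamming_rows_iff)
  finally show ?thesis
    by simp
qed

lemma card_downloads:
  assumes "h = N * (d - k)" and "k < d"
  shows "real (card (hamming_rows \<times> {1..N})) = real h * 2 ^ n / (real d - real k + real h)"
proof -
  have "card hamming_rows * (N + 1) = 2 ^ n"
    using card_hamming_rows unfolding N_eq .
  then have rows: "2 ^ n = real (card hamming_rows) * (real N + 1)"
    by (metis of_nat_1 of_nat_add of_nat_mult of_nat_numeral of_nat_power)
  have "real h * 2 ^ n / (real d - real k + real h)
      = real N * real (d - k) * 2 ^ n / ((real N + 1) * real (d - k))"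
    using assms by (simp add: algebra_simps)
  also have "\<dots> = real N * 2 ^ n / (real N + 1)"
    using assms(2) by simp
  also have "\<dots> = real N * real (card hamming_rows)"
    unfolding rows by (simp add: field_simps)
  finally show ?thesis
    by (simp add: card_cartesian_product)
qed

context
  fixes lam :: "nat \<Rightarrow> nat \<Rightarrow> 'a::field" and e :: "nat \<Rightarrow> nat \<Rightarrow> 'a" and k :: nat and R :: "nat set"
  assumes lam_inj: "inj_on (\<lambda>(j, v). lam j v) ({1..n} \<times> {0, 1})"
    and e: "e \<in> hadamard_msr_code n k lam"
    and R: "R \<subseteq> {1..n} - (\<Union>i\<in>{1..N}. P i)"
    and card_R: "\<And>i. i \<in> {1..N} \<Longrightarrow> card (P i) + k \<le> card R"
    and helpers: "\<And>j a i. j \<in> R \<Longrightarrow> a \<in> hamming_rows \<Longrightarrow> i \<in> {1..N} \<Longrightarrow>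
                    e j a + e j (flip i a) = 0"
begin

lemma hamming_row_flip_repair:
  assumes a: "a \<in> hamming_rows" and i: "i \<in> {1..N}" and j: "j \<in> {1..n}"
  shows "j \<in> P i \<Longrightarrow> e j a = 0 \<and> e j (flip i a) = 0"
    and "j \<notin> P i \<Longrightarrow> e j a + e j (flip i a) = 0"
proof -
  have a_less: "a < 2 ^ n"
    using a by (simp add: hamming_rows_iff)
  have R_i: "R \<subseteq> {1..n} - P i"
    using R i by blast
  have "bitv (flip i a) j' = bitv a j'" if "j' \<in> {1..n} - P i" for j'
    using that by (simp add: bitv_flip)
  note pair = hadamard_msr_row_pair_repair[OF lam_inj e a_less flip_less P_subset[OF i] this
      R_i card_R[OF i] helpers[OF _ a i] j]
  show "j \<in> P i \<Longrightarrow> e j a = 0 \<and> e j (flip i a) = 0"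
    using pair(2) bitv_eq_0_or_1[of a j] j by (auto simp: bitv_flip)
  show "j \<notin> P i \<Longrightarrow> e j a + e j (flip i a) = 0"
    using pair(1) j by (simp add: bitv_flip)
qed

text \<open>A row b is a Hamming row itself or, if its syndrome is the column col i1, the flip by i1
  of a Hamming row.\<close>
lemma repair_vanishes:
  assumes i: "i \<in> {1..N}" and j: "j \<in> P i"
  shows "e j b = 0"
proof (cases "b < 2 ^ n")
  case False
  with e show ?thesis
    by (rule hadamard_msr_code_outside)
next
  case b: True
  have j_n: "j \<in> {1..n}"
    using P_subset[OF i] j by blast
  note pair = hamming_row_flip_repair[OF _ _ j_n]
  consider "syndrome b = 0" | i1 where "i1 \<in> {1..N}" "syndrome b = col i1"
    using syndrome_cases[of b] by auto
  then show ?thesis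
  proof cases
    case 1
    then have "b \<in> hamming_rows"
      using b by (simp add: hamming_rows_iff)
    then show ?thesis
      using pair(1)[OF _ i j] by blast
  next
    case 2
    define a where "a = flip i1 b"
    have a: "a \<in> hamming_rows" and b_eq: "b = flip i1 a"
      unfolding a_def using 2 b by (simp_all add: hamming_rows_iff flip_less syndrome_flip flip_flip)
    show ?thesis
    proof (cases "i1 = i")
      case True
      then show ?thesis
        using pair(1)[OF a i j] b_eq by simp
    next
      case False
      then have "j \<notin> P i1"
        using P_disjoint[OF i 2(1)] j by blast
      then show ?thesis
        using pair(1)[OF a i j] pair(2)[OF a 2(1)] b_eq by simp
    qed
  qed
qed

end

lemma repair_unique:
  fixes lam :: "nat \<Rightarrow> nat \<Rightarrow> 'a::field"
  assumes lam_inj: "inj_on (\<lambda>(j, v). lam j v) ({1..n} \<times> {0, 1})"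
    and c: "c \<in> hadamard_msr_code n k lam" and c': "c' \<in> hadamard_msr_code n k lam"
    and R: "R \<subseteq> {1..n} - (\<Union>i\<in>{1..N}. P i)"
    and card_R: "\<And>i. i \<in> {1..N} \<Longrightarrow> card (P i) + k \<le> card R"
    and downloads: "\<And>j a i. j \<in> R \<Longrightarrow> a \<in> hamming_rows \<Longrightarrow> i \<in> {1..N} \<Longrightarrow>
                      c j a + c j (flip i a) = c' j a + c' j (flip i a)"
    and j: "j \<in> (\<Union>i\<in>{1..N}. P i)"
  shows "c j = c' j"
proof
  fix b
  have "c j b - c' j b = 0"
    using repair_vanishes[OF lam_inj hadamard_msr_code_diff[OF c c'] R card_R] downloads j
    by (auto simp: algebra_simps)
  then show "c j b = c' j b"
    by simp
qed

lemma downloads_determine_blocks: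
  fixes lam :: "nat \<Rightarrow> nat \<Rightarrow> 'a::field"
  assumes lam_inj: "inj_on (\<lambda>(j, v). lam j v) ({1..n} \<times> {0, 1})"
    and R: "R \<subseteq> {1..n} - (\<Union>i\<in>{1..N}. P i)"
    and card_R: "\<And>i. i \<in> {1..N} \<Longrightarrow> card (P i) + k \<le> card R"
  shows "\<forall>c\<in>hadamard_msr_code n k lam. \<forall>c'\<in>hadamard_msr_code n k lam.
        (\<forall>j\<in>R. \<forall>a < 2 ^ n. (\<lambda>i. bitv a (m i)) \<in> hamming_code w col \<longrightarrow>
           (\<forall>i\<in>{1..N}.
              (\<Sum>v\<in>{0, 1::nat}. c j (set_bits n a (P i) (\<lambda>x. (bitv a x + v) mod 2))) =
              (\<Sum>v\<in>{0, 1::nat}. c' j (set_bits n a (P i) (\<lambda>x. (bitv a x + v) mod 2)))))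
        \<longrightarrow> (\<forall>j\<in>(\<Union>i\<in>{1..N}. P i). c j = c' j)"
proof (intro ballI impI)
  fix c c' j
  assume c: "c \<in> hadamard_msr_code n k lam" and c': "c' \<in> hadamard_msr_code n k lam"
    and downloads: "\<forall>j\<in>R. \<forall>a < 2 ^ n. (\<lambda>i. bitv a (m i)) \<in> hamming_code w col \<longrightarrow>
           (\<forall>i\<in>{1..N}.
              (\<Sum>v\<in>{0, 1::nat}. c j (set_bits n a (P i) (\<lambda>x. (bitv a x + v) mod 2))) =
              (\<Sum>v\<in>{0, 1::nat}. c' j (set_bits n a (P i) (\<lambda>x. (bitv a x + v) mod 2))))"
    and j: "j \<in> (\<Union>i\<in>{1..N}. P i)"
  have "c j a + c j (flip i a) = c' j a + c' j (flip i a)"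
    if "j \<in> R" "a \<in> hamming_rows" "i \<in> {1..N}" for j a i
  proof -
    have a: "a < 2 ^ n" "(\<lambda>i. bitv a (m i)) \<in> hamming_code w col"
      using that(2) unfolding hamming_rows_def by auto
    then have "(\<Sum>v\<in>{0, 1::nat}. c j (set_bits n a (P i) (\<lambda>x. (bitv a x + v) mod 2)))
        = (\<Sum>v\<in>{0, 1::nat}. c' j (set_bits n a (P i) (\<lambda>x. (bitv a x + v) mod 2)))"
      using downloads that(1,3) by blast
    then show ?thesis
      unfolding sum_flip_pair[OF a(1), of "c j" i] sum_flip_pair[OF a(1), of "c' j" i] .
  qed
  then show "c j = c' j"
    using repair_unique[OF lam_inj c c' R card_R] j by blast
qed

lemma download_scheme:
  fixes lam :: "nat \<Rightarrow> nat \<Rightarrow> 'a::field"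
  assumes lam_inj: "inj_on (\<lambda>(j, v). lam j v) ({1..n} \<times> {0, 1})"
    and R: "R \<subseteq> {1..n} - (\<Union>i\<in>{1..N}. P i)"
    and card_R: "\<And>i. i \<in> {1..N} \<Longrightarrow> card (P i) + k \<le> card R"
    and h_eq: "h = N * (d - k)" and kd: "k < d"
  shows "\<exists>D (q :: nat \<times> nat \<Rightarrow> (nat \<Rightarrow> 'a) \<Rightarrow> 'a). finite D
       \<and> real (card D) = real h * real (2 ^ n) / (real d - real k + real h)
       \<and> (\<forall>c\<in>hadamard_msr_code n k lam. \<forall>c'\<in>hadamard_msr_code n k lam.
            (\<forall>j\<in>R. \<forall>x\<in>D. q x (c j) = q x (c' j)) \<longrightarrow> (\<forall>j\<in>(\<Union>i\<in>{1..N}. P i). c j = c' j))"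
proof (intro exI[of _ "hamming_rows \<times> {1..N}"] exI[of _ "\<lambda>(a, i) f. f a + f (flip i a)"]
    conjI ballI impI)
  show "finite (hamming_rows \<times> {1..N})"
    by (simp add: hamming_rows_def)
  show "real (card (hamming_rows \<times> {1..N})) = real h * real (2 ^ n) / (real d - real k + real h)"
    using card_downloads[OF h_eq kd] by simp
  fix c c' j
  assume c: "c \<in> hadamard_msr_code n k lam" and c': "c' \<in> hadamard_msr_code n k lam"
    and downloads: "\<forall>j\<in>R. \<forall>x\<in>hamming_rows \<times> {1..N}.
                      (case x of (a, i) \<Rightarrow> \<lambda>f. f a + f (flip i a)) (c j)
                    = (case x of (a, i) \<Rightarrow> \<lambda>f. f a + f (flip i a)) (c' j)"
    and j: "j \<in> (\<Union>i\<in>{1..N}. P i)"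
  have "c j a + c j (flip i a) = c' j a + c' j (flip i a)"
    if "j \<in> R" "a \<in> hamming_rows" "i \<in> {1..N}" for j a i
    using downloads that by fastforce
  then show "c j = c' j"
    using repair_unique[OF lam_inj c c' R card_R _ j] by blast
qed

end

lemma hadamard_msr_download_scheme:
  fixes lam :: "nat \<Rightarrow> nat \<Rightarrow> 'a::field" and col :: "nat \<Rightarrow> nat"
  assumes lam_inj: "inj_on (\<lambda>(j, v). lam j v) ({1..n} \<times> {0, 1})"
    and kd: "k < d" and h_eq: "h = N * (d - k)"
    and N_eq: "2 ^ w = N + 1" and col_bij: "bij_betw col {1..N} {1..2 ^ w - 1}"
    and H: "H \<subseteq> {1..n}" "card H = h" and R: "R \<subseteq> {1..n} - H" "card R = d"
  shows "\<exists>D (q :: nat \<times> nat \<Rightarrow> (nat \<Rightarrow> 'a) \<Rightarrow> 'a). finite D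
       \<and> real (card D) = real h * real (2 ^ n) / (real d - real k + real h)
       \<and> (\<forall>c\<in>hadamard_msr_code n k lam. \<forall>c'\<in>hadamard_msr_code n k lam.
            (\<forall>j\<in>R. \<forall>x\<in>D. q x (c j) = q x (c' j)) \<longrightarrow> (\<forall>j\<in>H. c j = c' j))"
proof -
  have "card H = N * (d - k)"
    using H(2) h_eq by simp
  then obtain P where card_P: "\<And>i. i \<in> {1..N} \<Longrightarrow> card (P i) = d - k"
    and P_disjoint: "\<And>i i'. i \<in> {1..N} \<Longrightarrow> i' \<in> {1..N} \<Longrightarrow> i \<noteq> i' \<Longrightarrow> P i \<inter> P i' = {}"
    and P_union: "(\<Union>i\<in>{1..N}. P i) = H"
    by (rule partition_into_equal_blocks[OF finite_subset[OF H(1) finite_atLeastAtMost]]) blast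
  have "\<forall>i\<in>{1..N}. \<exists>x. x \<in> P i"
  proof
    fix i assume "i \<in> {1..N}"
    then have "card (P i) \<noteq> 0"
      using card_P kd by simp
    then show "\<exists>x. x \<in> P i"
      by (metis card.empty ex_in_conv)
  qed
  then obtain m where m: "\<forall>i\<in>{1..N}. m i \<in> P i"
    by (rule bchoice[THEN exE])
  have P_subset: "P i \<subseteq> {1..n}" if "i \<in> {1..N}" for i
    using P_union H(1) that by blast
  interpret hamming_blocks n N w P m col
    by unfold_locales (use N_eq col_bij P_subset P_disjoint m in auto)
  have R_P: "R \<subseteq> {1..n} - (\<Union>i\<in>{1..N}. P i)"
    using R(1) P_union by simp
  have card_R: "card (P i) + k \<le> card R" if "i \<in> {1..N}" for i
    using card_P[OF that] R(2) kd by simp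
  show ?thesis
    using download_scheme[OF lam_inj R_P card_R h_eq kd] unfolding P_union .
qed

lemma hadamard_msr_hd_optimal_repair:
  fixes lam :: "nat \<Rightarrow> nat \<Rightarrow> 'a::field" and col :: "nat \<Rightarrow> nat"
  assumes "inj_on (\<lambda>(j, v). lam j v) ({1..n} \<times> {0, 1})"
    and "k < d" and "h = N * (d - k)"
    and "2 ^ w = N + 1" and "bij_betw col {1..N} {1..2 ^ w - 1}"
  shows "hd_optimal_repair n k (2 ^ n) h d (hadamard_msr_code n k lam)"
  by (rule hd_optimal_repairI) (rule hadamard_msr_download_scheme[OF assms])

theorem theorem4:
  fixes n k h d w :: nat
    and lam :: "nat \<Rightarrow> nat \<Rightarrow> 'a::{field,finite}"
    and H R :: "nat set"
    and P :: "nat \<Rightarrow> nat set"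
    and m col :: "nat \<Rightarrow> nat"
  assumes "n > k" and "k \<ge> 1"
    and "2 \<le> h" and "h \<le> n - k"
    and "k < d" and "d \<le> n - h"
    and "(d - k) dvd h"
    and "(h div (d - k) + 1) dvd 2 ^ n"
    and "2 ^ w = h div (d - k) + 1"
    and "card (UNIV :: 'a set) > 2 * n"
    and "inj_on (\<lambda>(j, v). lam j v) ({1..n} \<times> {0, 1})"
    and "H \<subseteq> {1..n}" and "card H = h"
    and "R \<subseteq> {1..n} - H" and "card R = d"
    and "\<forall>i\<in>{1..h div (d - k)}. card (P i) = d - k"
    and "\<forall>i\<in>{1..h div (d - k)}. \<forall>i'\<in>{1..h div (d - k)}. i \<noteq> i' \<longrightarrow> P i \<inter> P i' = {}"
    and "(\<Union>i\<in>{1..h div (d - k)}. P i) = H"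
    and "\<forall>i\<in>{1..h div (d - k)}. m i \<in> P i"
    and "bij_betw col {1..h div (d - k)} {1..2 ^ w - 1}"
  shows
    "(\<forall>c\<in>hadamard_msr_code n k lam. \<forall>c'\<in>hadamard_msr_code n k lam.
        (\<forall>j\<in>R. \<forall>a < 2 ^ n. (\<lambda>i. bitv a (m i)) \<in> hamming_code w col \<longrightarrow>
           (\<forall>i\<in>{1..h div (d - k)}.
              (\<Sum>v\<in>{0, 1::nat}. c j (set_bits n a (P i) (\<lambda>x. (bitv a x + v) mod 2))) =
              (\<Sum>v\<in>{0, 1::nat}. c' j (set_bits n a (P i) (\<lambda>x. (bitv a x + v) mod 2)))))
        \<longrightarrow> (\<forall>j\<in>H. c j = c' j))
     \<and> real (card {(a, i). a < 2 ^ n \<and> (\<lambda>i'. bitv a (m i')) \<in> hamming_code w col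
                          \<and> i \<in> {1..h div (d - k)}})
         = real h * 2 ^ n / (real d - real k + real h)
     \<and> real d * real (card {(a, i). a < 2 ^ n \<and> (\<lambda>i'. bitv a (m i')) \<in> hamming_code w col
                          \<and> i \<in> {1..h div (d - k)}})
         = real d * real h * 2 ^ n / (real d - real k + real h)
     \<and> hd_optimal_repair n k (2 ^ n) h d (hadamard_msr_code n k lam)"
proof -
  let ?N = "h div (d - k)"
  have h_eq: "h = ?N * (d - k)"
    using assms(7) by simp
  have P_subset: "P i \<subseteq> {1..n}" if "i \<in> {1..?N}" for i
    using assms(12,18) that by blast
  interpret hamming_blocks n ?N w P m col
    by unfold_locales (use assms(9,17,19,20) P_subset in auto)
  have R_H: "R \<subseteq> {1..n} - (\<Union>i\<in>{1..?N}. P i)"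
    using assms(14,18) by simp
  have card_R: "card (P i) + k \<le> card R" if "i \<in> {1..?N}" for i
    using assms(5,15,16) that by simp
  have "{(a, i). a < 2 ^ n \<and> (\<lambda>i'. bitv a (m i')) \<in> hamming_code w col \<and> i \<in> {1..?N}}
      = hamming_rows \<times> {1..?N}"
    by (auto simp: hamming_rows_def)
  then have count: "real (card {(a, i). a < 2 ^ n \<and> (\<lambda>i'. bitv a (m i')) \<in> hamming_code w col
                                    \<and> i \<in> {1..?N}})
      = real h * 2 ^ n / (real d - real k + real h)"
    using card_downloads[OF h_eq assms(5)] by simp
  moreover from count
  have "real d * real (card {(a, i). a < 2 ^ n \<and> (\<lambda>i'. bitv a (m i')) \<in> hamming_code w col
                                    \<and> i \<in> {1..?N}})
      = real d * real h * 2 ^ n / (real d - real k + real h)"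
    by simp
  ultimately show ?thesis
    using downloads_determine_blocks[OF assms(11) R_H card_R]
      hadamard_msr_hd_optimal_repair[OF assms(11,5) h_eq assms(9,20)]
    unfolding assms(18) by blast
qed

end
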